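(* Let $a\in(\frac12,\frac23]$. Define \[ d_n=\begin{cases} t_1, & n=0,\\ \min\big\{\frac{t_1+1}{1},\dots,\frac{t_n+1}{n},\frac{t_{n+1}}{n+1}\big\}, & 1\le n<\sigma_a,\\ \min\big\{\frac{t_1+1}{1},\dots,\frac{t_n+1}{n}\big\}, & n=\sigma_a<\infty.\end{cases} \] Then for any $x\in[0,1)$ and integers $k,n$ with $0\le n\le\sigma_a$ and $0\le k\le\sigma_a(x)$ we have $d_n\ge t_1$ and \[ t_k(x)\ge k\,d_n-\mathbb 1\{n\neq0\}. \]
   Context: For $a\in[\frac12,\frac23]$ let $I_a=\big(\frac{2a-1}{1-a},1\big)$ and define $T_a$ on $[0,\frac1{1-a}]\setminus I_a$ by $T_a(x)=\frac1a(x+1)$ for $0\le x\le\frac{2a-1}{1-a}$ and $T_a(x)=\frac1a(x-1)$ for $1\le x\le\frac1{1-a}$; for $a=\frac23$ set $T_{2/3}(1)=0$. Let $\varkappa_a(x)=\inf\{k\ge0:T_a^k(x)\in I_a\}$ ($\inf\emptyset=\infty$). Let $\sigma_a(x)=\sum_{n=1}^{\varkappa_a(x)}\mathbb 1\{T_a^n(x)<1\}$ (the number of returns to $[0,1)$), $t_0(x)=0$ and $t_k(x)=\inf\{n>t_{k-1}(x):T_a^n(x)<1\}$ for $1\le k<\sigma_a(x)+1$ (the return times). Write $\sigma_a=\sigma_a(0)$ and $t_k=t_k(0)$. *)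

theory Defs
  imports Complex_Main "HOL-Library.Extended_Nat"
begin

definition hole :: "real \<Rightarrow> real set" where
  "hole a = {(2*a-1)/(1-a) <..< 1}"

(* The map T_a; values on the hole I_a are irrelevant (T_a undefined there).
   For a = 2/3 the convention T_{2/3}(1) = 0 is built in. *)
definition Tmap :: "real \<Rightarrow> real \<Rightarrow> real" where
  "Tmap a x = (if a = 2/3 \<and> x = 1 then 0
               else if x \<le> (2*a-1)/(1-a) then (x+1)/a else (x-1)/a)"

definition kappa :: "real \<Rightarrow> real \<Rightarrow> enat" where
  "kappa a x = (if \<exists>k. (Tmap a ^^ k) x \<in> hole a
                then enat (LEAST k. (Tmap a ^^ k) x \<in> hole a) else \<infinity>)"

definition sigma :: "real \<Rightarrow> real \<Rightarrow> enat" where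
  "sigma a x = (let S = {n::nat. 1 \<le> n \<and> enat n \<le> kappa a x \<and> (Tmap a ^^ n) x < 1}
                in if finite S then enat (card S) else \<infinity>)"

(* return times t_k(x); meaningful for k \<le> sigma a x *)
fun tret :: "real \<Rightarrow> real \<Rightarrow> nat \<Rightarrow> nat" where
  "tret a x 0 = 0"
| "tret a x (Suc k) = (LEAST n. tret a x k < n \<and> (Tmap a ^^ n) x < 1)"

(* d_n, with t_j = t_j(0); meaningful for n \<le> sigma_a = sigma a 0 *)
definition dseq :: "real \<Rightarrow> nat \<Rightarrow> real" where
  "dseq a n = (if n = 0 then real (tret a 0 1)
     else if enat n < sigma a 0 then
       min (Min ((\<lambda>j. (real (tret a 0 j) + 1) / real j) ` {1..n}))
           (real (tret a 0 (n+1)) / real (n+1))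
     else Min ((\<lambda>j. (real (tret a 0 j) + 1) / real j) ` {1..n}))"

end

(*
  The orbit of 0 is the lowest orbit of T_a.  As long as x has the same return times
  to [0,1) as 0, the two orbits stay on common increasing branches of T_a, so the orbit
  of 0 stays below that of x and x cannot return before 0 does.  Hence at the first
  index j where the return times differ, x returns at least one step later than 0,
  which pays for the correction term in  j d_n <= t_j(0) + 1;  if the return times agree
  up to j = n + 1, the definition of d_n gives  (n+1) d_n <= t_{n+1}(0)  directly.  In either
  case j d_n <= t_j(x), and restarting the orbit of x at its j-th return point, which
  again lies in [0,1), the bound follows by induction on k.
*)
theory Submission
  imports Defs
begin

section \<open>Return times\<close>

declare tret.simps(2) [simp del]

abbreviation orbit :: "real \<Rightarrow> real \<Rightarrow> nat \<Rightarrow> real" where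
  "orbit a y m \<equiv> (Tmap a ^^ m) y"

text \<open>\<open>tret\<close> is defined by \<open>LEAST\<close>, so \<open>tret a y (Suc l)\<close> is a genuine return time only
  if \<open>y\<close> returns to \<open>[0,1)\<close> at some time after \<open>tret a y l\<close>.\<close>

definition has_returns :: "real \<Rightarrow> real \<Rightarrow> nat \<Rightarrow> bool" where
  "has_returns a y k \<longleftrightarrow> (\<forall>l<k. \<exists>m>tret a y l. orbit a y m < 1)"

lemma orbit_orbit: "orbit a (orbit a y s) m = orbit a y (m + s)"
  by (simp add: funpow_add)

lemma has_returns_0 [simp]: "has_returns a y 0"
  by (simp add: has_returns_def)

lemma has_returns_Suc:
  "has_returns a y (Suc k) \<longleftrightarrow> has_returns a y k \<and> (\<exists>m>tret a y k. orbit a y m < 1)"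
  by (auto simp: has_returns_def less_Suc_eq)

lemma has_returns_mono: "has_returns a y k \<Longrightarrow> l \<le> k \<Longrightarrow> has_returns a y l"
  by (simp add: has_returns_def)

lemma tret_Suc_gt:
  assumes "\<exists>m>tret a y l. orbit a y m < 1"
  shows "tret a y l < tret a y (Suc l)"
  using LeastI_ex[OF assms] by (simp add: tret.simps(2))

lemma orbit_tret_Suc_lt1:
  assumes "\<exists>m>tret a y l. orbit a y m < 1"
  shows "orbit a y (tret a y (Suc l)) < 1"
  using LeastI_ex[OF assms] by (simp add: tret.simps(2))

lemma tret_Suc_le: "tret a y l < m \<Longrightarrow> orbit a y m < 1 \<Longrightarrow> tret a y (Suc l) \<le> m"
  by (simp add: tret.simps(2) Least_le)

lemma orbit_ge1_before_tret_Suc: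
  "tret a y l < m \<Longrightarrow> m < tret a y (Suc l) \<Longrightarrow> 1 \<le> orbit a y m"
  using tret_Suc_le[of a y l m] by linarith

lemma tret_strict_mono:
  assumes "has_returns a y k" "l < l'" "l' \<le> k"
  shows "tret a y l < tret a y l'"
  using assms(2,3)
proof (induction l')
  case (Suc l')
  have "tret a y l' < tret a y (Suc l')"
    using assms(1) Suc.prems(2) by (intro tret_Suc_gt) (simp add: has_returns_def)
  with Suc show ?case by (cases "l = l'") auto
qed simp

lemma orbit_tret_lt1:
  assumes "has_returns a y k" "1 \<le> l" "l \<le> k"
  shows "orbit a y (tret a y l) < 1"
proof -
  obtain l0 where "l = Suc l0" using assms(2) by (cases l) auto
  moreover have "\<exists>m>tret a y l0. orbit a y m < 1"
    using assms \<open>l = Suc l0\<close> by (simp add: has_returns_def)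
  ultimately show ?thesis using orbit_tret_Suc_lt1 by blast
qed

lemma return_time_is_tret:
  assumes "has_returns a y k" "1 \<le> m" "m \<le> tret a y k" "orbit a y m < 1"
  shows "\<exists>l\<in>{1..k}. m = tret a y l"
  using assms
proof (induction k)
  case (Suc k)
  show ?case
  proof (cases "m \<le> tret a y k")
    case True
    with Suc has_returns_mono[of a y "Suc k" k] show ?thesis by fastforce
  next
    case False
    with Suc.prems orbit_ge1_before_tret_Suc[of a y k m] have "m = tret a y (Suc k)"
      by fastforce
    then show ?thesis by force
  qed
qed simp

lemma tret_shift:
  assumes "has_returns a y (j + i)"
  defines "y' \<equiv> orbit a y (tret a y j)"
  shows "has_returns a y' i \<and> tret a y (j + i) = tret a y j + tret a y' i"
  using assms(1)
proof (induction i)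
  case (Suc i)
  define s where "s = tret a y j"
  have shift: "orbit a y' m = orbit a y (m + s)" for m
    by (simp add: y'_def s_def orbit_orbit)
  have IH: "has_returns a y' i" "tret a y (j + i) = s + tret a y' i"
    using Suc has_returns_mono[of a y "j + Suc i" "j + i"] s_def by auto
  obtain m where m: "tret a y (j + i) < m" "orbit a y m < 1"
    using Suc.prems by (auto simp: has_returns_Suc)
  have ret': "\<exists>m>tret a y' i. orbit a y' m < 1"
    using m IH shift[of "m - s"] by (intro exI[of _ "m - s"]) auto
  have "tret a y (Suc (j + i)) = (LEAST n. tret a y (j + i) < n \<and> orbit a y n < 1)"
    by (rule tret.simps(2))
  also have "\<dots> = s + tret a y' (Suc i)"
  proof (rule Least_equality)
    show "tret a y (j + i) < s + tret a y' (Suc i) \<and> orbit a y (s + tret a y' (Suc i)) < 1"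
      using tret_Suc_gt[OF ret'] orbit_tret_Suc_lt1[OF ret'] IH shift by (simp add: add.commute)
  next
    fix n assume n: "tret a y (j + i) < n \<and> orbit a y n < 1"
    then have "tret a y' (Suc i) \<le> n - s"
      using IH shift[of "n - s"] by (intro tret_Suc_le) auto
    with n IH show "s + tret a y' (Suc i) \<le> n" by linarith
  qed
  finally have "tret a y (Suc (j + i)) = s + tret a y' (Suc i)" .
  with IH ret' show ?case by (simp add: has_returns_Suc s_def)
qed (simp add: y'_def)

lemma tret_mono:
  assumes "has_returns a y k" "l \<le> l'" "l' \<le> k"
  shows "tret a y l \<le> tret a y l'"
  using tret_strict_mono[OF assms(1), of l l'] assms(2,3) by (cases "l = l'") auto

lemma inj_on_tret: "has_returns a y k \<Longrightarrow> inj_on (tret a y) {..k}"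
  by (intro inj_onI, rule ccontr) (auto dest: tret_strict_mono simp: neq_iff)

section \<open>Hitting time of the hole and number of returns\<close>

lemma enat_le_kappa_iff: "enat t \<le> kappa a y \<longleftrightarrow> (\<forall>m<t. orbit a y m \<notin> hole a)"
proof (cases "\<exists>k. orbit a y k \<in> hole a")
  case True
  define K where "K = (LEAST k. orbit a y k \<in> hole a)"
  have "kappa a y = enat K" using True by (simp add: kappa_def K_def)
  moreover have "orbit a y K \<in> hole a" using LeastI_ex[OF True] by (simp add: K_def)
  moreover have "orbit a y m \<notin> hole a" if "m < K" for m
    using not_less_Least that by (auto simp: K_def)
  ultimately show ?thesis by (auto simp: not_le[symmetric])
qed (simp add: kappa_def)

definition return_set :: "real \<Rightarrow> real \<Rightarrow> nat set" where
  "return_set a y = {n. 1 \<le> n \<and> enat n \<le> kappa a y \<and> orbit a y n < 1}"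

lemma sigma_return_set:
  "sigma a y = (if finite (return_set a y) then enat (card (return_set a y)) else \<infinity>)"
  by (simp add: sigma_def return_set_def)

lemma return_set_upto_tret:
  assumes "has_returns a y k" "enat (tret a y k) \<le> kappa a y"
  shows "{m \<in> return_set a y. m \<le> tret a y k} = tret a y ` {1..k}"
proof
  show "{m \<in> return_set a y. m \<le> tret a y k} \<subseteq> tret a y ` {1..k}"
    using return_time_is_tret[OF assms(1)] by (force simp: return_set_def)
next
  have "tret a y l \<in> return_set a y \<and> tret a y l \<le> tret a y k" if "l \<in> {1..k}" for l
  proof -
    have "tret a y 0 < tret a y l" and le: "tret a y l \<le> tret a y k"
      using that tret_strict_mono[OF assms(1), of 0 l] tret_mono[OF assms(1), of l k] by auto
    moreover have "enat (tret a y l) \<le> kappa a y"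
      using le assms(2) by (meson enat_ord_simps(1) order_trans)
    ultimately show ?thesis using orbit_tret_lt1[OF assms(1), of l] that
      by (auto simp: return_set_def)
  qed
  then show "tret a y ` {1..k} \<subseteq> {m \<in> return_set a y. m \<le> tret a y k}" by auto
qed

lemma card_return_set_upto_tret:
  assumes "has_returns a y k" "enat (tret a y k) \<le> kappa a y"
  shows "card {m \<in> return_set a y. m \<le> tret a y k} = k"
proof -
  have "inj_on (tret a y) {1..k}"
    using inj_on_tret[OF assms(1)] by (rule inj_on_subset) auto
  then show ?thesis by (simp add: return_set_upto_tret[OF assms] card_image)
qed

lemma sigma_ge_iff:
  "enat k \<le> sigma a y \<longleftrightarrow> has_returns a y k \<and> enat (tret a y k) \<le> kappa a y"
proof
  show "enat k \<le> sigma a y" if "has_returns a y k \<and> enat (tret a y k) \<le> kappa a y"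
  proof (cases "finite (return_set a y)")
    case True
    then have "k \<le> card (return_set a y)"
      using card_return_set_upto_tret[of a y k] that
      by (metis (no_types, lifting) card_mono mem_Collect_eq subsetI)
    with True show ?thesis by (simp add: sigma_return_set)
  qed (simp add: sigma_return_set)
next
  show "enat k \<le> sigma a y \<Longrightarrow> has_returns a y k \<and> enat (tret a y k) \<le> kappa a y"
  proof (induction k)
    case (Suc k)
    then have IH: "has_returns a y k" "enat (tret a y k) \<le> kappa a y"
      by (auto simp: Suc_ile_eq)
    let ?A = "{m \<in> return_set a y. m \<le> tret a y k}"
    have "\<not> return_set a y \<subseteq> ?A"
    proof
      assume "return_set a y \<subseteq> ?A"
      then have "finite (return_set a y)" "card (return_set a y) \<le> k"
        using card_mono[of ?A] card_return_set_upto_tret[OF IH] finite_subset by fastforce+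
      with Suc.prems show False by (simp add: sigma_return_set)
    qed
    then obtain m where m: "m \<in> return_set a y" "tret a y k < m"
      by (metis (lifting) mem_Collect_eq not_le subsetI)
    then have ret: "\<exists>m>tret a y k. orbit a y m < 1" by (auto simp: return_set_def)
    have "tret a y (Suc k) \<le> m"
      using m by (intro tret_Suc_le) (auto simp: return_set_def)
    moreover have "enat m \<le> kappa a y" using m(1) by (simp add: return_set_def)
    ultimately have "enat (tret a y (Suc k)) \<le> kappa a y"
      using order_trans enat_ord_simps(1) by blast
    with IH ret show ?case by (simp add: has_returns_Suc)
  qed (simp add: zero_enat_def[symmetric])
qed

lemma sigma_ge_downward: "enat k \<le> sigma a y \<Longrightarrow> j \<le> k \<Longrightarrow> enat j \<le> sigma a y"
  using order_trans enat_ord_simps(1) by blast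

lemma
  assumes "enat (j + i) \<le> sigma a y"
  defines "y' \<equiv> orbit a y (tret a y j)"
  shows sigma_shift: "enat i \<le> sigma a y'"
    and tret_add: "tret a y (j + i) = tret a y j + tret a y' i"
proof -
  have ret: "has_returns a y (j + i)" and kap: "enat (tret a y (j + i)) \<le> kappa a y"
    using assms(1) sigma_ge_iff by auto
  then show add: "tret a y (j + i) = tret a y j + tret a y' i"
    using tret_shift y'_def by blast
  have "orbit a y' m \<notin> hole a" if "m < tret a y' i" for m
  proof -
    have "m + tret a y j < tret a y (j + i)" using add that by linarith
    with kap show ?thesis by (simp add: y'_def enat_le_kappa_iff orbit_orbit)
  qed
  with ret tret_shift show "enat i \<le> sigma a y'"
    by (simp add: sigma_ge_iff enat_le_kappa_iff y'_def)
qed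

section \<open>Monotone branches of the map\<close>

lemma Tmap_lower: "x < 1 \<Longrightarrow> x \<le> (2*a-1)/(1-a) \<Longrightarrow> Tmap a x = (x + 1) / a"
  by (simp add: Tmap_def)

lemma le_branch_point_if_not_in_hole: "x < 1 \<Longrightarrow> x \<notin> hole a \<Longrightarrow> x \<le> (2*a-1)/(1-a)"
  by (auto simp: hole_def)

text \<open>For \<open>x \<le> y\<close>, this says that \<open>x\<close> and \<open>y\<close> lie on a common increasing branch of \<open>T\<^sub>a\<close>.\<close>

definition same_branch :: "real \<Rightarrow> real \<Rightarrow> real \<Rightarrow> bool" where
  "same_branch a x y \<longleftrightarrow> 1 \<le> x \<or> (y < 1 \<and> y \<notin> hole a)"

lemma not_in_hole_if_same_branch: "x \<le> y \<Longrightarrow> same_branch a x y \<Longrightarrow> x \<notin> hole a"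
  by (auto simp: same_branch_def hole_def)

locale Tmap_param =
  fixes a :: real
  assumes half_lt_a: "1/2 < a" and a_le_two_thirds: "a \<le> 2/3"
begin

lemma a_pos: "0 < a"
  using half_lt_a by simp

lemma Tmap_upper:
  assumes "1 \<le> x"
  shows "Tmap a x = (x - 1) / a"
proof (cases "a = 2/3")
  case False
  then have "(2*a-1)/(1-a) < 1"
    using half_lt_a a_le_two_thirds by (simp add: divide_simps)
  with assms False show ?thesis by (simp add: Tmap_def)
next
  case True
  with assms show ?thesis by (simp add: Tmap_def True)
qed

lemma Tmap_nonneg: "0 \<le> x \<Longrightarrow> x \<notin> hole a \<Longrightarrow> 0 \<le> Tmap a x"
  using Tmap_upper[of x] Tmap_lower[of x a] le_branch_point_if_not_in_hole[of x a] a_pos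
  by (cases "1 \<le> x") auto

lemma orbit_nonneg: "0 \<le> y \<Longrightarrow> enat n \<le> kappa a y \<Longrightarrow> 0 \<le> orbit a y n"
proof (induction n)
  case (Suc n)
  then have "enat n \<le> kappa a y" "orbit a y n \<notin> hole a"
    by (auto simp: enat_le_kappa_iff)
  with Suc show ?case by (simp add: Tmap_nonneg)
qed simp

lemma orbit_tret_in_unit_interval:
  assumes "0 \<le> y" "enat j \<le> sigma a y" "1 \<le> j"
  shows "0 \<le> orbit a y (tret a y j)" "orbit a y (tret a y j) < 1"
  using assms orbit_nonneg orbit_tret_lt1 by (auto simp: sigma_ge_iff)

lemma Tmap_mono: "x \<le> y \<Longrightarrow> same_branch a x y \<Longrightarrow> Tmap a x \<le> Tmap a y"
  using Tmap_upper[of x] Tmap_upper[of y] Tmap_lower[of x a] Tmap_lower[of y a] a_pos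
    le_branch_point_if_not_in_hole[of y a]
  by (auto simp: same_branch_def divide_right_mono)

lemma orbit_mono:
  assumes "x \<le> y" "\<And>m. m < n \<Longrightarrow> same_branch a (orbit a x m) (orbit a y m)"
  shows "orbit a x n \<le> orbit a y n"
  using assms(2) by (induction n) (auto simp: assms(1) Tmap_mono)

end

section \<open>Comparison with the orbit of 0\<close>

lemma same_branch_while_return_times_agree:
  assumes "z < 1" "enat k \<le> sigma a z" "i < k" "has_returns a 0 i"
    and agree: "\<forall>l\<le>i. tret a z l = tret a 0 l" and "m \<le> tret a 0 i"
  shows "same_branch a (orbit a 0 m) (orbit a z m)"
proof -
  have retz: "has_returns a z k" and "enat (tret a z k) \<le> kappa a z"
    using assms(2) by (auto simp: sigma_ge_iff)
  moreover have "m < tret a z k"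
    using tret_strict_mono[OF retz assms(3)] agree assms(6) by auto
  ultimately have "orbit a z m \<notin> hole a" by (auto simp: enat_le_kappa_iff)
  moreover have "orbit a z m < 1" if return: "orbit a 0 m < 1"
  proof (cases "m = 0")
    case False
    then obtain l where "l \<in> {1..i}" "m = tret a 0 l"
      using return_time_is_tret[OF assms(4) _ assms(6) return] by auto
    then show ?thesis using orbit_tret_lt1[OF retz, of l] agree assms(3) by auto
  qed (use assms(1) in simp)
  ultimately show ?thesis by (auto simp: same_branch_def not_less[symmetric])
qed

context Tmap_param
begin

lemma zero_returns_no_later:
  assumes "0 \<le> z" "z < 1" "enat k \<le> sigma a z" "i < k" "enat i \<le> sigma a 0"
    and agree: "\<forall>l\<le>i. tret a z l = tret a 0 l"
  shows "enat (Suc i) \<le> sigma a 0" "tret a 0 (Suc i) \<le> tret a z (Suc i)"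
proof -
  define s where "s = tret a 0 i"
  have ret0: "has_returns a 0 i" using assms(5) by (simp add: sigma_ge_iff)
  have early: "same_branch a (orbit a 0 m) (orbit a z m)" if "m \<le> s" for m
    using same_branch_while_return_times_agree[OF assms(2,3,4) ret0 agree] that s_def by blast
  have retz: "\<exists>m>tret a z i. orbit a z m < 1"
    using assms(3,4) by (auto simp: sigma_ge_iff has_returns_def)
  define r' where "r' = tret a z (Suc i)"
  have r': "s < r'" "orbit a z r' < 1"
    using tret_Suc_gt[OF retz] orbit_tret_Suc_lt1[OF retz] agree s_def r'_def by auto
  have ret0': "\<exists>m>s. orbit a 0 m < 1"
  proof (rule ccontr)
    assume none: "\<not> (\<exists>m>s. orbit a 0 m < 1)"
    have "same_branch a (orbit a 0 m) (orbit a z m)" for m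
      using early none by (cases "m \<le> s") (auto simp: same_branch_def not_less)
    then have "orbit a 0 r' \<le> orbit a z r'" using orbit_mono assms(1) by blast
    with r' none show False by auto
  qed
  define r where "r = tret a 0 (Suc i)"
  have branch: "same_branch a (orbit a 0 m) (orbit a z m)" if "m < r" for m
    using early orbit_ge1_before_tret_Suc[of a 0 i m] that
    by (cases "m \<le> s") (auto simp: same_branch_def r_def s_def)
  have le: "orbit a 0 m \<le> orbit a z m" if "m \<le> r" for m
    using orbit_mono[OF assms(1)] branch that by auto
  show "r \<le> tret a z (Suc i)"
  proof (rule ccontr)
    assume "\<not> r \<le> tret a z (Suc i)"
    then have "1 \<le> orbit a 0 r'"
      using orbit_ge1_before_tret_Suc[of a 0 i r'] r'(1) by (simp add: r_def r'_def s_def)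
    with le[of r'] r' \<open>\<not> r \<le> tret a z (Suc i)\<close> show False by (simp add: r'_def)
  qed
  have "\<forall>m<r. orbit a 0 m \<notin> hole a"
    using branch le not_in_hole_if_same_branch by (meson less_imp_le)
  with ret0 ret0' show "enat (Suc i) \<le> sigma a 0"
    by (simp add: sigma_ge_iff has_returns_Suc enat_le_kappa_iff r_def s_def)
qed

lemma first_deviation:
  assumes "0 \<le> z" "z < 1" "enat k \<le> sigma a z" "1 \<le> N" "N \<le> k"
  obtains j where "1 \<le> j" "j \<le> N" "enat j \<le> sigma a 0"
    "tret a 0 j + 1 \<le> tret a z j \<or> (j = N \<and> tret a z j = tret a 0 j)"
proof -
  have "(enat i \<le> sigma a 0 \<and> (\<forall>l\<le>i. tret a z l = tret a 0 l)) \<or>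
        (\<exists>j. 1 \<le> j \<and> j \<le> i \<and> enat j \<le> sigma a 0 \<and> tret a 0 j + 1 \<le> tret a z j)"
    if "i \<le> N" for i
    using that
  proof (induction i)
    case 0
    then show ?case by (simp add: zero_enat_def[symmetric])
  next
    case (Suc i)
    show ?case
    proof (cases "enat i \<le> sigma a 0 \<and> (\<forall>l\<le>i. tret a z l = tret a 0 l)")
      case True
      then have "enat (Suc i) \<le> sigma a 0" "tret a 0 (Suc i) \<le> tret a z (Suc i)"
        using zero_returns_no_later[OF assms(1-3)] Suc.prems assms(5) by auto
      then show ?thesis using True by (cases "tret a 0 (Suc i) = tret a z (Suc i)")
        (auto simp: le_Suc_eq)
    next
      case False
      with Suc show ?thesis by (auto intro: le_SucI)
    qed
  qed
  from this[OF order_refl] assms(4) that show ?thesis by auto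
qed

lemma return_times_lower_bound:
  fixes D e :: real
  assumes "1 \<le> M" "0 \<le> e" "e \<le> 1"
    and below_M: "\<And>j. 1 \<le> j \<Longrightarrow> j < M \<Longrightarrow> real j * D \<le> real (tret a 0 j) + e"
    and at_M: "enat M \<le> sigma a 0 \<Longrightarrow> real M * D \<le> real (tret a 0 M)"
  shows "0 \<le> z \<Longrightarrow> z < 1 \<Longrightarrow> enat k \<le> sigma a z \<Longrightarrow> real k * D \<le> real (tret a z k) + e"
proof (induction k arbitrary: z rule: less_induct)
  case (less k z)
  show ?case
  proof (cases "k = 0")
    case True
    with assms(2) show ?thesis by simp
  next
    case False
    have restart: "real k * D \<le> real (tret a z k) + e"
      if j: "1 \<le> j" "j \<le> k" "real j * D \<le> real (tret a z j)" for j
    proof -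
      define z' where "z' = orbit a z (tret a z j)"
      have sigma: "enat (j + (k - j)) \<le> sigma a z" using less.prems(3) j by simp
      have "real (k - j) * D \<le> real (tret a z' (k - j)) + e"
        using less.IH[of "k - j" z'] sigma_shift[OF sigma] sigma_ge_downward[OF less.prems(3) j(2)]
          orbit_tret_in_unit_interval less.prems(1) j(1) False by (simp add: z'_def)
      moreover have "tret a z k = tret a z j + tret a z' (k - j)"
        using tret_add[OF sigma] j(2) by (simp add: z'_def)
      ultimately show ?thesis using j by (simp add: of_nat_diff algebra_simps)
    qed
    \<comment> \<open>At the first deviation from the return times of 0, \<open>z\<close> is at least one step late,
      which absorbs \<open>e \<le> 1\<close>.\<close>
    obtain j where j: "1 \<le> j" "j \<le> min k M" "enat j \<le> sigma a 0"
      and dev: "tret a 0 j + 1 \<le> tret a z j \<or> (j = min k M \<and> tret a z j = tret a 0 j)"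
      using first_deviation[OF less.prems, of "min k M"] assms(1) False by auto
    show ?thesis
    proof (cases "j < M")
      case True
      then have "real j * D \<le> real (tret a 0 j) + e" using below_M j(1) by blast
      with dev assms(3) True show ?thesis using restart[of j] j by (auto simp: min_def split: if_splits)
    next
      case False
      then have "j = M" using j(2) by simp
      with at_M j(3) dev have "real j * D \<le> real (tret a z j)" by auto
      then show ?thesis using restart[of j] j by simp
    qed
  qed
qed

lemma tret_ge_mult_tret1:
  "0 \<le> z \<Longrightarrow> z < 1 \<Longrightarrow> enat k \<le> sigma a z \<Longrightarrow> real k * real (tret a 0 1) \<le> real (tret a z k)"
  using return_times_lower_bound[of 1 0 "real (tret a 0 1)"] by simp

end

section \<open>The constants \<open>d\<^sub>n\<close>\<close>

lemma dseq_le_quotient: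
  assumes "1 \<le> j" "j \<le> n"
  shows "real j * dseq a n \<le> real (tret a 0 j) + 1"
proof -
  let ?Q = "(\<lambda>j. (real (tret a 0 j) + 1) / real j) ` {1..n}"
  have "dseq a n \<le> Min ?Q" using assms by (simp add: dseq_def del: Min_ge_iff)
  also have "Min ?Q \<le> (real (tret a 0 j) + 1) / real j" using assms by (intro Min_le) auto
  finally show ?thesis using assms by (simp add: field_simps)
qed

lemma dseq_le_next:
  assumes "1 \<le> n" "enat n < sigma a 0"
  shows "real (Suc n) * dseq a n \<le> real (tret a 0 (Suc n))"
proof -
  have "dseq a n \<le> real (tret a 0 (Suc n)) / real (Suc n)" using assms by (simp add: dseq_def)
  then show ?thesis by (simp add: field_simps)
qed

lemma (in Tmap_param) tret1_le_dseq:
  assumes "enat n \<le> sigma a 0"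
  shows "real (tret a 0 1) \<le> dseq a n"
proof -
  have mult: "real j * real (tret a 0 1) \<le> real (tret a 0 j)" if "enat j \<le> sigma a 0" for j
    using tret_ge_mult_tret1[of 0 j] that by simp
  have "real (tret a 0 1) \<le> (real (tret a 0 j) + 1) / real j" if "j \<in> {1..n}" for j
    using mult[OF sigma_ge_downward[OF assms, of j]] that by (simp add: field_simps)
  moreover have "real (tret a 0 1) \<le> real (tret a 0 (Suc n)) / real (Suc n)" if "enat n < sigma a 0"
    using mult[of "Suc n"] that by (simp add: Suc_ile_eq field_simps)
  ultimately show ?thesis by (simp add: dseq_def)
qed

theorem lemma3p2:
  fixes a x :: real and k n :: nat
  assumes "1/2 < a" and "a \<le> 2/3"
    and "0 \<le> x" and "x < 1"
    and "enat n \<le> sigma a 0"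
    and "enat k \<le> sigma a x"
  shows "real (tret a 0 1) \<le> dseq a n \<and>
         real k * dseq a n - (if n \<noteq> 0 then 1 else 0) \<le> real (tret a x k)"
proof -
  interpret Tmap_param a using assms(1,2) by unfold_locales
  have "real k * dseq a n - (if n \<noteq> 0 then 1 else 0) \<le> real (tret a x k)"
  proof (cases "n = 0")
    case True
    then show ?thesis using tret_ge_mult_tret1[OF assms(3,4,6)] by (simp add: dseq_def)
  next
    case False
    have "real k * dseq a n \<le> real (tret a x k) + 1"
    proof (rule return_times_lower_bound[of "Suc n"])
      show "real j * dseq a n \<le> real (tret a 0 j) + 1" if "1 \<le> j" "j < Suc n" for j
        using dseq_le_quotient that by simp
      show "real (Suc n) * dseq a n \<le> real (tret a 0 (Suc n))" if "enat (Suc n) \<le> sigma a 0"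
        using dseq_le_next False that by (simp add: Suc_ile_eq)
    qed (use assms in auto)
    with False show ?thesis by simp
  qed
  with tret1_le_dseq[OF assms(5)] show ?thesis by simp
qed

end
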